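(* Let $x\in(0,1)$ and let $((a_n,\varepsilon_n))_{n\ge1}$ be an infinite OOCF expansion of $x$. Then for every $n\ge1$, $x$ lies in the closed interval with endpoints $p_n/q_n$ and $p_n''/q_n''$; if $x$ is irrational it lies strictly between them.
   Context: Admissible digits: $D=\{(1,1)\}\cup\{(a,\varepsilon): a\in\mathbb Z,\ a\ge2,\ \varepsilon\in\{-1,1\}\}$. For integers $k\ge1$ put $B(k+1,-1)=\left[\frac{k-1}{k},\frac{2k-1}{2k+1}\right]$ and $B(k,1)=\left[\frac{2k-1}{2k+1},\frac{k}{k+1}\right]$. The OOCF map $T:[0,1]\to[0,1]$ is $T(x)=\frac{kx-(k-1)}{k-(k+1)x}$ for $x\in B(k+1,-1)$, $T(x)=\frac{k-(k+1)x}{kx-(k-1)}$ for $x\in B(k,1)$ ($k\ge1$; formulas agree at common endpoints), and $T(1)=1$. An infinite OOCF expansion of $x\in[0,1]$ is a sequence $((a_n,\varepsilon_n))_{n\ge1}$ in $D$ with $T^{n-1}(x)\in B(a_n,\varepsilon_n)$ and $T^{n-1}(x)\neq1$ for all $n\ge1$. For $n\ge1$, with $M=\begin{pmatrix}1&-1\\1&0\end{pmatrix}$, $J=\begin{pmatrix}2&-1\\1&0\end{pmatrix}$, $E(a,\varepsilon)=\begin{pmatrix}a&\varepsilon\\1&0\end{pmatrix}$, define integers by $M E(a_1,\varepsilon_1) J\cdots J E(a_n,\varepsilon_n) J=\begin{pmatrix}p_n&-p_n'\\ q_n&-q_n'\end{pmatrix}$ and $\begin{pmatrix}p_n''\\ q_n''\end{pmatrix}=M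 E(a_1,\varepsilon_1) J\cdots J E(a_n,\varepsilon_n)\begin{pmatrix}1\\1\end{pmatrix}$. Thus $p_n/q_n$ is the finite continued fraction $1-\cfrac{1}{a_1+\cfrac{\varepsilon_1}{2-\cfrac{1}{\ddots\ \cfrac{\varepsilon_{n-1}}{2-\cfrac{1}{a_n+\varepsilon_n/2}}}}}$ (principal convergent) and $p_n''/q_n''$ is the same with last term $a_n+\varepsilon_n$ (pseudo-convergent). *)

theory Defs
  imports "HOL-Analysis.Analysis"
begin

definition OOCF_digits :: "(int \<times> int) set" where
  "OOCF_digits = {(1,1)} \<union> {(a,e). a \<ge> 2 \<and> (e = -1 \<or> e = 1)}"

definition OOCF_B :: "int \<times> int \<Rightarrow> real set" where
  "OOCF_B d = (case d of (a, e) \<Rightarrow>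
     if e = -1 \<and> a \<ge> 2 then
       (let k = real_of_int (a - 1) in {(k - 1) / k .. (2*k - 1) / (2*k + 1)})
     else if e = 1 \<and> a \<ge> 1 then
       (let k = real_of_int a in {(2*k - 1) / (2*k + 1) .. k / (k + 1)})
     else {})"

definition OOCF_T :: "real \<Rightarrow> real" where
  "OOCF_T x = (if x = 1 then 1 else
     if (\<exists>k::nat. k \<ge> 1 \<and> x \<in> OOCF_B (int k + 1, -1))
     then (let k = real (SOME k::nat. k \<ge> 1 \<and> x \<in> OOCF_B (int k + 1, -1))
           in (k * x - (k - 1)) / (k - (k + 1) * x))
     else (let k = real (SOME k::nat. k \<ge> 1 \<and> x \<in> OOCF_B (int k, 1))
           in (k - (k + 1) * x) / (k * x - (k - 1))))"

definition is_OOCF_expansion :: "real \<Rightarrow> (nat \<Rightarrow> int \<times> int) \<Rightarrow> bool" where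
  "is_OOCF_expansion x d \<longleftrightarrow>
     (\<forall>n\<ge>1. d n \<in> OOCF_digits \<and> (OOCF_T ^^ (n - 1)) x \<in> OOCF_B (d n)
            \<and> (OOCF_T ^^ (n - 1)) x \<noteq> 1)"

text \<open>2x2 integer matrices as ((a,b),(c,d)) = rows.\<close>
type_synonym mat2 = "(int \<times> int) \<times> (int \<times> int)"

definition mmul :: "mat2 \<Rightarrow> mat2 \<Rightarrow> mat2" where
  "mmul A B = (case A of ((a,b),(c,d)) \<Rightarrow> case B of ((e,f),(g,h)) \<Rightarrow>
     ((a*e + b*g, a*f + b*h), (c*e + d*g, c*f + d*h)))"

definition matM :: mat2 where "matM = ((1,-1),(1,0))"
definition matJ :: mat2 where "matJ = ((2,-1),(1,0))"
definition matE :: "int \<times> int \<Rightarrow> mat2" where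
  "matE d = (case d of (a,e) \<Rightarrow> ((a,e),(1,0)))"

fun OOCF_prodJ :: "(nat \<Rightarrow> int \<times> int) \<Rightarrow> nat \<Rightarrow> mat2" where
  "OOCF_prodJ d 0 = matM"
| "OOCF_prodJ d (Suc n) = mmul (mmul (OOCF_prodJ d n) (matE (d (Suc n)))) matJ"

definition OOCF_p :: "(nat \<Rightarrow> int \<times> int) \<Rightarrow> nat \<Rightarrow> int" where
  "OOCF_p d n = fst (fst (OOCF_prodJ d n))"
definition OOCF_q :: "(nat \<Rightarrow> int \<times> int) \<Rightarrow> nat \<Rightarrow> int" where
  "OOCF_q d n = fst (snd (OOCF_prodJ d n))"

text \<open>(p_n'', q_n'') = M E J ... J E(d_n) (1,1)^T.\<close>
definition OOCF_pseudo :: "(nat \<Rightarrow> int \<times> int) \<Rightarrow> nat \<Rightarrow> int \<times> int" where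
  "OOCF_pseudo d n = (case mmul (OOCF_prodJ d (n - 1)) (matE (d n)) of
      ((a,b),(c,e)) \<Rightarrow> (a + b, c + e))"
definition OOCF_p2 :: "(nat \<Rightarrow> int \<times> int) \<Rightarrow> nat \<Rightarrow> int" where
  "OOCF_p2 d n = fst (OOCF_pseudo d n)"
definition OOCF_q2 :: "(nat \<Rightarrow> int \<times> int) \<Rightarrow> nat \<Rightarrow> int" where
  "OOCF_q2 d n = snd (OOCF_pseudo d n)"

end

theory Submission
  imports Defs
begin

(* Write z = 1/(1 - t). On the cylinder B(a,eps) one has 1/2 <= eps (z - a) <= 1, and
   T t = 1/(eps (z - a)) - 1; equivalently z = a + eps/(1 + T t), so that the vector
   (1, 1 - t) is a multiple of E(a,eps) J (1, 1 - T t).  Iterating, with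
   s = 1 - T^n x in [0,1] and the product matrix written ((p_n, -p_n'), (q_n, -q_n')),
   x = (p_n - p_n' s) / (q_n - q_n' s).  Since 0 <= q_n' < q_n this is a weighted mean of its
   values at s = 0 and s = 1, which are p_n/q_n and (as J fixes (1,1)) p_n''/q_n''. *)

lemma OOCF_B_bounds:
  assumes "(a, e) \<in> OOCF_digits" "t \<in> OOCF_B (a, e)"
  shows "t < 1" "1/2 \<le> e * (1/(1-t) - a)" "e * (1/(1-t) - a) \<le> 1"
proof -
  have "(e = -1 \<and> a \<ge> 2) \<or> (e = 1 \<and> a \<ge> 1)"
    using assms(1) unfolding OOCF_digits_def by auto
  then have "t < 1 \<and> 1/2 \<le> e * (1/(1-t) - a) \<and> e * (1/(1-t) - a) \<le> 1"
  proof
    assume ae: "e = -1 \<and> a \<ge> 2"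
    define k where "k = real_of_int (a - 1)"
    have k: "k \<ge> 1" "(k - 1) / k \<le> t" "t \<le> (2*k - 1) / (2*k + 1)"
      using assms(2) ae unfolding OOCF_B_def k_def Let_def by auto
    then have "t < 1" by (smt (verit) divide_less_eq_1_pos)
    with k show ?thesis using ae unfolding k_def by (simp add: field_simps)
  next
    assume ae: "e = 1 \<and> a \<ge> 1"
    define k where "k = real_of_int a"
    have k: "k \<ge> 1" "(2*k - 1) / (2*k + 1) \<le> t" "t \<le> k / (k + 1)"
      using assms(2) ae unfolding OOCF_B_def k_def Let_def by auto
    then have "t < 1" by (smt (verit) divide_less_eq_1_pos)
    with k show ?thesis using ae unfolding k_def by (simp add: field_simps)
  qed
  then show "t < 1" "1/2 \<le> e * (1/(1-t) - a)" "e * (1/(1-t) - a) \<le> 1" by auto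
qed

(* Cylinders meet only at endpoints; this makes the SOME in OOCF_T harmless there. *)
lemma OOCF_B_overlap_eq:
  assumes "(a, e) \<in> OOCF_digits" "t \<in> OOCF_B (a, e)"
    and "(a', e') \<in> OOCF_digits" "t \<in> OOCF_B (a', e')"
  shows "e * (1/(1-t) - a) = e' * (1/(1-t) - a')"
proof -
  define c where "c = e * (1/(1-t) - a)"
  define c' where "c' = e' * (1/(1-t) - a')"
  define m where "m = e * (a' - a)"
  have e: "e = -1 \<or> e = 1" "e' = -1 \<or> e' = 1"
    using assms(1,3) unfolding OOCF_digits_def by auto
  have b: "1/2 \<le> c" "c \<le> 1" "1/2 \<le> c'" "c' \<le> 1"
    using OOCF_B_bounds[OF assms(1,2)] OOCF_B_bounds[OF assms(3,4)]
    unfolding c_def c'_def by auto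
  from e have "e' = e \<or> e' = - e" by auto
  then have "c = c'"
  proof
    assume "e' = e"
    then have "c - c' = of_int m" unfolding c_def c'_def m_def by (simp add: algebra_simps)
    moreover have "\<bar>c - c'\<bar> < 1" using b by auto
    ultimately have "m = 0" by linarith
    with \<open>c - c' = of_int m\<close> show ?thesis by simp
  next
    assume "e' = - e"
    then have "c + c' = of_int m" unfolding c_def c'_def m_def by (simp add: algebra_simps)
    moreover have "1 \<le> c + c'" "c + c' \<le> 2" using b by auto
    ultimately have "m = 1 \<or> m = 2" by linarith
    with \<open>c + c' = of_int m\<close> b show ?thesis by auto
  qed
  then show ?thesis unfolding c_def c'_def .
qed

lemma OOCF_T_eq:
  assumes "(a, e) \<in> OOCF_digits" "t \<in> OOCF_B (a, e)"
  shows "OOCF_T t = 1 / (e * (1/(1-t) - a)) - 1"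
proof -
  have t: "t < 1" "t \<noteq> 1" using OOCF_B_bounds(1)[OF assms] by auto
  obtain a' e' where digit': "(a', e') \<in> OOCF_digits" "t \<in> OOCF_B (a', e')"
    and T': "OOCF_T t = 1 / (e' * (1/(1-t) - a')) - 1"
  proof (cases "\<exists>k::nat. k \<ge> 1 \<and> t \<in> OOCF_B (int k + 1, -1)")
    case True
    define k where "k = (SOME k::nat. k \<ge> 1 \<and> t \<in> OOCF_B (int k + 1, -1))"
    have k: "k \<ge> 1" "t \<in> OOCF_B (int k + 1, -1)"
      using someI_ex[OF True] unfolding k_def by auto
    then have digit: "(int k + 1, -1) \<in> OOCF_digits" unfolding OOCF_digits_def by auto
    have "1/2 \<le> real k + 1 - 1/(1-t)" using OOCF_B_bounds(2)[OF digit k(2)] by simp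
    moreover have "real k - (real k + 1) * t = (1 - t) * (k + 1 - 1/(1-t))"
      using t by (simp add: field_simps)
    ultimately have "real k - (real k + 1) * t \<noteq> 0" using t by simp
    then have "(real k * t - (real k - 1)) / (real k - (real k + 1) * t)
        = 1 / (-1 * (1/(1-t) - (real k + 1))) - 1"
      using t by (simp add: field_simps)
    moreover have "OOCF_T t = (real k * t - (real k - 1)) / (real k - (real k + 1) * t)"
      using True t unfolding OOCF_T_def k_def Let_def by auto
    ultimately show thesis using that[OF digit k(2)] by simp
  next
    case False
    have "e = 1 \<and> a \<ge> 1"
    proof (rule ccontr)
      assume "\<not> (e = 1 \<and> a \<ge> 1)"
      then have "e = -1" "a \<ge> 2" using assms(1) unfolding OOCF_digits_def by auto
      then have "nat (a - 1) \<ge> 1 \<and> t \<in> OOCF_B (int (nat (a - 1)) + 1, -1)"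
        using assms(2) by simp
      with False show False by blast
    qed
    with assms(2) have Ex: "\<exists>k::nat. k \<ge> 1 \<and> t \<in> OOCF_B (int k, 1)"
      by (intro exI[of _ "nat a"]) auto
    define k where "k = (SOME k::nat. k \<ge> 1 \<and> t \<in> OOCF_B (int k, 1))"
    have k: "k \<ge> 1" "t \<in> OOCF_B (int k, 1)"
      using someI_ex[OF Ex] unfolding k_def by auto
    then have digit: "(int k, 1) \<in> OOCF_digits" unfolding OOCF_digits_def by auto
    have "1/2 \<le> 1/(1-t) - real k" using OOCF_B_bounds(2)[OF digit k(2)] by simp
    moreover have "real k * t - (real k - 1) = (1 - t) * (1/(1-t) - real k)"
      using t by (simp add: field_simps)
    ultimately have "real k * t - (real k - 1) \<noteq> 0" using t by simp
    then have "(real k - (real k + 1) * t) / (real k * t - (real k - 1))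
        = 1 / (1 * (1/(1-t) - real k)) - 1"
      using t by (simp add: field_simps)
    moreover have "OOCF_T t = (real k - (real k + 1) * t) / (real k * t - (real k - 1))"
      using False t unfolding OOCF_T_def k_def Let_def by auto
    ultimately show thesis using that[OF digit k(2)] by simp
  qed
  with OOCF_B_overlap_eq[OF assms digit'] show ?thesis by simp
qed

lemma OOCF_T_step:
  assumes "(a, e) \<in> OOCF_digits" "t \<in> OOCF_B (a, e)"
  shows "0 \<le> OOCF_T t" "OOCF_T t \<le> 1" "(a * (1 + OOCF_T t) + e) * (1 - t) = 1 + OOCF_T t"
proof -
  define c where "c = e * (1/(1-t) - a)"
  have t: "t < 1" and c: "1/2 \<le> c" "c \<le> 1"
    using OOCF_B_bounds[OF assms] unfolding c_def by auto
  have w: "1 + OOCF_T t = 1 / c" using OOCF_T_eq[OF assms] unfolding c_def by simp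
  moreover have "1 \<le> 1 / c" "1 / c \<le> 2" using c by (simp_all add: field_simps)
  ultimately show "0 \<le> OOCF_T t" "OOCF_T t \<le> 1" by linarith+
  have "e = -1 \<or> e = 1" using assms(1) unfolding OOCF_digits_def by auto
  then have "a + e * c = 1/(1-t)" unfolding c_def by auto
  then have "a * (1/c) + e = 1/(1-t) / c" using c by (simp add: field_simps)
  then show "(a * (1 + OOCF_T t) + e) * (1 - t) = 1 + OOCF_T t"
    unfolding w using t by simp
qed

lemma mem_closed_segment_linear_fractional:
  fixes A B C D s x :: real
  assumes "0 < C" "0 < C - D" "0 \<le> s" "s \<le> 1" "x * (C - D * s) = A - B * s"
  shows "x \<in> closed_segment (A / C) ((A - B) / (C - D))"
proof -
  have "C - D * s = (1 - s) * C + s * (C - D)" by (simp add: algebra_simps)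
  also have "\<dots> > 0"
    using assms(1-4) by (smt (verit) mult_nonneg_nonneg mult_pos_pos)
  finally have pos: "0 < C - D * s" .
  define u where "u = s * (C - D) / (C - D * s)"
  have "s * C \<le> C" "D * s \<le> C * s"
    using assms(1-4) by (simp_all add: mult_left_le_one_le mult_right_mono)
  then have u: "0 \<le> u" "u \<le> 1"
    using assms pos unfolding u_def by (simp_all add: field_simps)
  have "1 - u = (1 - s) * C / (C - D * s)"
    using pos unfolding u_def by (simp add: field_simps)
  then have "(1 - u) * (A / C) = (1 - s) * A / (C - D * s)" using assms(1) by simp
  moreover have "u * ((A - B) / (C - D)) = s * (A - B) / (C - D * s)"
    using assms(2) unfolding u_def by simp
  ultimately have "(1 - u) * (A / C) + u * ((A - B) / (C - D))
      = ((1 - s) * A + s * (A - B)) / (C - D * s)"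
    by (simp add: add_divide_distrib)
  also have "\<dots> = x" using assms(5) pos by (simp add: field_simps)
  finally show ?thesis using u unfolding closed_segment_def by force
qed

definition OOCF_p' :: "(nat \<Rightarrow> int \<times> int) \<Rightarrow> nat \<Rightarrow> int" where
  "OOCF_p' d n = - snd (fst (OOCF_prodJ d n))"

definition OOCF_q' :: "(nat \<Rightarrow> int \<times> int) \<Rightarrow> nat \<Rightarrow> int" where
  "OOCF_q' d n = - snd (snd (OOCF_prodJ d n))"

lemma OOCF_prodJ_eq:
  "OOCF_prodJ d n = ((OOCF_p d n, - OOCF_p' d n), (OOCF_q d n, - OOCF_q' d n))"
  by (simp add: OOCF_p_def OOCF_p'_def OOCF_q_def OOCF_q'_def)

lemma OOCF_pq_0: "OOCF_p d 0 = 1" "OOCF_p' d 0 = 1" "OOCF_q d 0 = 1" "OOCF_q' d 0 = 0"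
  by (simp_all add: OOCF_p_def OOCF_p'_def OOCF_q_def OOCF_q'_def matM_def)

lemma OOCF_pq_Suc:
  assumes "d (Suc n) = (a, e)"
  shows "OOCF_p d (Suc n) = 2 * (a * OOCF_p d n - OOCF_p' d n) + e * OOCF_p d n"
    and "OOCF_p' d (Suc n) = a * OOCF_p d n - OOCF_p' d n"
    and "OOCF_q d (Suc n) = 2 * (a * OOCF_q d n - OOCF_q' d n) + e * OOCF_q d n"
    and "OOCF_q' d (Suc n) = a * OOCF_q d n - OOCF_q' d n"
proof -
  have "OOCF_prodJ d (Suc n) =
    ((2 * (a * OOCF_p d n - OOCF_p' d n) + e * OOCF_p d n, - (a * OOCF_p d n - OOCF_p' d n)),
     (2 * (a * OOCF_q d n - OOCF_q' d n) + e * OOCF_q d n, - (a * OOCF_q d n - OOCF_q' d n)))"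
    using assms by (simp add: OOCF_prodJ_eq[of d n] mmul_def matE_def matJ_def algebra_simps)
  then show "OOCF_p d (Suc n) = 2 * (a * OOCF_p d n - OOCF_p' d n) + e * OOCF_p d n"
    and "OOCF_p' d (Suc n) = a * OOCF_p d n - OOCF_p' d n"
    and "OOCF_q d (Suc n) = 2 * (a * OOCF_q d n - OOCF_q' d n) + e * OOCF_q d n"
    and "OOCF_q' d (Suc n) = a * OOCF_q d n - OOCF_q' d n"
    by (simp_all add: OOCF_p_def[of d "Suc n"] OOCF_p'_def[of d "Suc n"]
        OOCF_q_def[of d "Suc n"] OOCF_q'_def[of d "Suc n"])
qed

lemma OOCF_pseudo_eq:
  assumes "n \<ge> 1"
  shows "OOCF_p2 d n = OOCF_p d n - OOCF_p' d n" "OOCF_q2 d n = OOCF_q d n - OOCF_q' d n"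
proof -
  obtain m where n: "n = Suc m" using assms by (cases n) auto
  obtain a e where digit: "d (Suc m) = (a, e)" by fastforce
  show "OOCF_p2 d n = OOCF_p d n - OOCF_p' d n" "OOCF_q2 d n = OOCF_q d n - OOCF_q' d n"
    using digit unfolding n OOCF_pq_Suc[of d m a e, OF digit]
    by (simp_all add: OOCF_p2_def OOCF_q2_def OOCF_pseudo_def OOCF_prodJ_eq[of d m]
        mmul_def matE_def algebra_simps)
qed

lemma OOCF_q'_bounds:
  assumes "\<forall>j\<in>{1..n}. d j \<in> OOCF_digits"
  shows "0 \<le> OOCF_q' d n \<and> OOCF_q' d n < OOCF_q d n"
  using assms
proof (induction n)
  case 0
  show ?case by (simp add: OOCF_pq_0)
next
  case (Suc n)
  obtain a e where digit: "d (Suc n) = (a, e)" by fastforce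
  with Suc.prems have "(a, e) \<in> OOCF_digits"
    by (metis atLeastAtMost_iff le_add1 order_refl plus_1_eq_Suc)
  then have ae: "1 \<le> a" "1 \<le> a + e" unfolding OOCF_digits_def by auto
  define q q' where "q = OOCF_q d n" and "q' = OOCF_q' d n"
  have "0 \<le> q'" "q' < q" using Suc unfolding q_def q'_def by auto
  moreover from this ae have "q \<le> a * q" "q \<le> a * q + e * q"
    by (simp_all add: mult_le_cancel_right1 flip: distrib_right)
  ultimately show ?case
    unfolding OOCF_pq_Suc[of d n a e, OF digit] q_def[symmetric] q'_def[symmetric] by (smt (verit))
qed

lemma OOCF_row_step:
  fixes a e p p' s t :: real
  assumes "(a * (1 + s) + e) * (1 - t) = 1 + s"
  shows "(2 * (a * p - p') + e * p) - (a * p - p') * (1 - s)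
    = (a * (1 + s) + e) * (p - p' * (1 - t))"
proof -
  have "(2 * (a * p - p') + e * p) - (a * p - p') * (1 - s)
      = (a * (1 + s) + e) * p - p' * (1 + s)"
    by (simp add: algebra_simps)
  also have "\<dots> = (a * (1 + s) + e) * (p - p' * (1 - t))"
    by (subst (2) assms[symmetric]) (simp add: algebra_simps)
  finally show ?thesis .
qed

lemma OOCF_expansion_convergent_relation:
  fixes x t :: real and n :: nat
  assumes "is_OOCF_expansion x d"
  defines "t \<equiv> 1 - (OOCF_T ^^ n) x"
  shows "x * (OOCF_q d n - OOCF_q' d n * t) = OOCF_p d n - OOCF_p' d n * t"
  unfolding t_def
proof (induction n)
  case 0
  show ?case by (simp add: OOCF_pq_0)
next
  case (Suc n)
  obtain a e where digit: "d (Suc n) = (a, e)" by fastforce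
  have "(a, e) \<in> OOCF_digits" "(OOCF_T ^^ n) x \<in> OOCF_B (a, e)"
    using assms(1) digit unfolding is_OOCF_expansion_def
    by (metis diff_Suc_1 le_add1 plus_1_eq_Suc)+
  then have "(a * (1 + (OOCF_T ^^ Suc n) x) + e) * (1 - (OOCF_T ^^ n) x)
      = 1 + (OOCF_T ^^ Suc n) x"
    using OOCF_T_step(3) by simp
  note step = OOCF_row_step[OF this]
  show ?case
    unfolding OOCF_pq_Suc[of d n a e, OF digit] of_int_add of_int_diff of_int_mult of_int_numeral
    unfolding step using Suc.IH by (metis mult.left_commute)
qed

theorem lemma3p5:
  fixes x :: real and d :: "nat \<Rightarrow> int \<times> int" and n :: nat
  assumes "0 < x" "x < 1" "is_OOCF_expansion x d" "n \<ge> 1"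
  defines "u \<equiv> real_of_int (OOCF_p d n) / real_of_int (OOCF_q d n)"
      and "v \<equiv> real_of_int (OOCF_p2 d n) / real_of_int (OOCF_q2 d n)"
  shows "(min u v \<le> x \<and> x \<le> max u v) \<and>
         (x \<notin> \<rat> \<longrightarrow> min u v < x \<and> x < max u v)"
proof -
  obtain m where n: "n = Suc m" using assms(4) by (cases n) auto
  obtain a e where digit: "d n = (a, e)" by fastforce
  have "d n \<in> OOCF_digits" "(OOCF_T ^^ (n - 1)) x \<in> OOCF_B (d n)"
    using assms(3,4) unfolding is_OOCF_expansion_def by blast+
  then have "(a, e) \<in> OOCF_digits" "(OOCF_T ^^ m) x \<in> OOCF_B (a, e)"
    unfolding digit by (simp_all add: n)
  then have T: "0 \<le> (OOCF_T ^^ n) x" "(OOCF_T ^^ n) x \<le> 1"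
    using OOCF_T_step(1,2) n by auto
  have "0 \<le> OOCF_q' d n" "OOCF_q' d n < OOCF_q d n"
    using OOCF_q'_bounds assms(3) unfolding is_OOCF_expansion_def by auto
  then have "x \<in> closed_segment u v"
    using mem_closed_segment_linear_fractional
        [OF _ _ _ _ OOCF_expansion_convergent_relation[OF assms(3)]] T
    unfolding u_def v_def OOCF_pseudo_eq[OF assms(4)] by simp
  then have between: "min u v \<le> x \<and> x \<le> max u v"
    by (auto simp: closed_segment_eq_real_ivl split: if_splits)
  moreover have "x \<noteq> u" "x \<noteq> v" if "x \<notin> \<rat>"
    using that unfolding u_def v_def by auto
  ultimately show ?thesis by (auto simp: min_def max_def split: if_splits)
qed

end
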